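(* Let $N\ge1$, $V=\{1,\dots,N\}$, $A$ an $N\times N$ row-stochastic matrix, and $\sigma_1,\sigma_2,\dots$ random variables with values in $V$. Consider $x(k+1)=A_{\sigma_k}x(k)$, $k\ge1$, with deterministic $x(1)\in\mathbb R^N$. Suppose: (a) $\mathcal G(A)$ is rooted. (b) There exists $\alpha>0$ such that whenever $\mathbb P(\sigma_k\mid\sigma_{k-1},\dots,\sigma_1)\neq0$, it is $\ge\alpha$. (c) For every $k\ge1$ there is $\mathscr I_k\subseteq V$ such that $\{\sigma:\mathbb P(\sigma_k=\sigma\mid\sigma_{k-1},\dots,\sigma_1)\neq0\}=\mathscr I_k$ for all past values $(\sigma_{k-1},\dots,\sigma_1)\in V^{k-1}$. (d) There exists $q>0$ with $\bigcup_{\tau=k}^{k+q-1}\mathscr I_\tau=V$ for all $k\ge1$. (e) There exists a nonempty $\chi\subseteq\mathbbm r(A)$ (a strongly connected component of $\mathbbm r(A)$, i.e. the subgraph of $\mathcal G(A)$ induced by $\chi$ is strongly connected) with $\chi\subseteq\mathscr I_k$ for all $k\ge1$. Then the iteration reaches consensus almost surely.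
   Context: $\mathcal G(A)$ is the directed graph on $V$ with an edge $(j,i)$ iff $a_{ij}>0$; it is rooted if some node $r$ has a directed path to every other node, and $\mathbbm r(A)$ is the set of such roots. For $\sigma\in V$, $A_\sigma$ is the identity matrix with its $\sigma$-th row replaced by the $\sigma$-th row of $A$. For $k=1$ conditional probabilities given the empty past are unconditional. The iteration reaches consensus almost surely if for every $\varepsilon>0$ and every $x(1)$, $\lim_{k\to\infty}\mathbb P\big(\sum_{j=1}^N (x_j(k)-\frac1N\sum_{i=1}^N x_i(k))^2\ge\varepsilon\big)=0$. *)

theory Defs
  imports "HOL-Probability.Probability"
begin

text \<open>Node set V = {1..N}; matrices are functions nat => nat => real, vectors nat => real,
  only entries indexed by V matter.\<close>

definition row_stochastic :: "nat \<Rightarrow> (nat \<Rightarrow> nat \<Rightarrow> real) \<Rightarrow> bool" where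
  "row_stochastic N A \<longleftrightarrow>
     (\<forall>i\<in>{1..N}. \<forall>j\<in>{1..N}. A i j \<ge> 0) \<and> (\<forall>i\<in>{1..N}. (\<Sum>j\<in>{1..N}. A i j) = 1)"

definition gedge :: "nat \<Rightarrow> (nat \<Rightarrow> nat \<Rightarrow> real) \<Rightarrow> nat \<Rightarrow> nat \<Rightarrow> bool" where
  "gedge N A j i \<longleftrightarrow> j \<in> {1..N} \<and> i \<in> {1..N} \<and> A i j > 0"

definition roots :: "nat \<Rightarrow> (nat \<Rightarrow> nat \<Rightarrow> real) \<Rightarrow> nat set" where
  "roots N A = {r\<in>{1..N}. \<forall>v\<in>{1..N}. (gedge N A)\<^sup>*\<^sup>* r v}"

definition rooted :: "nat \<Rightarrow> (nat \<Rightarrow> nat \<Rightarrow> real) \<Rightarrow> bool" where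
  "rooted N A \<longleftrightarrow> roots N A \<noteq> {}"

definition induced_strongly_connected :: "nat \<Rightarrow> (nat \<Rightarrow> nat \<Rightarrow> real) \<Rightarrow> nat set \<Rightarrow> bool" where
  "induced_strongly_connected N A C \<longleftrightarrow>
     (\<forall>u\<in>C. \<forall>v\<in>C. (\<lambda>a b. gedge N A a b \<and> a \<in> C \<and> b \<in> C)\<^sup>*\<^sup>* u v)"

definition sel_mat :: "(nat \<Rightarrow> nat \<Rightarrow> real) \<Rightarrow> nat \<Rightarrow> nat \<Rightarrow> nat \<Rightarrow> real" where
  "sel_mat A s i j = (if i = s then A i j else if i = j then 1 else 0)"

definition mat_vec :: "nat \<Rightarrow> (nat \<Rightarrow> nat \<Rightarrow> real) \<Rightarrow> (nat \<Rightarrow> real) \<Rightarrow> nat \<Rightarrow> real" where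
  "mat_vec N B x i = (\<Sum>j\<in>{1..N}. B i j * x j)"

text \<open>x(1) = x1, x(k+1) = A_{sigma_k} x(k); index 0 unused (set to x1).\<close>
fun traj :: "nat \<Rightarrow> (nat \<Rightarrow> nat \<Rightarrow> real) \<Rightarrow> (nat \<Rightarrow> 'a \<Rightarrow> nat) \<Rightarrow> (nat \<Rightarrow> real)
              \<Rightarrow> nat \<Rightarrow> 'a \<Rightarrow> nat \<Rightarrow> real" where
  "traj N A \<sigma> x1 0 \<omega> = x1"
| "traj N A \<sigma> x1 (Suc k) \<omega> =
     (if k = 0 then x1 else mat_vec N (sel_mat A (\<sigma> k \<omega>)) (traj N A \<sigma> x1 k \<omega>))"

definition past_event :: "'a measure \<Rightarrow> (nat \<Rightarrow> 'a \<Rightarrow> nat) \<Rightarrow> nat \<Rightarrow> (nat \<Rightarrow> nat) \<Rightarrow> 'a set" where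
  "past_event M \<sigma> k v = {\<omega>\<in>space M. \<forall>i\<in>{1..<k}. \<sigma> i \<omega> = v i}"

definition cond_prob :: "'a measure \<Rightarrow> (nat \<Rightarrow> 'a \<Rightarrow> nat) \<Rightarrow> nat \<Rightarrow> nat \<Rightarrow> (nat \<Rightarrow> nat) \<Rightarrow> real" where
  "cond_prob M \<sigma> k s v =
     measure M {\<omega>\<in>past_event M \<sigma> k v. \<sigma> k \<omega> = s} / measure M (past_event M \<sigma> k v)"

definition disagreement :: "nat \<Rightarrow> (nat \<Rightarrow> real) \<Rightarrow> real" where
  "disagreement N x = (\<Sum>j\<in>{1..N}. (x j - (\<Sum>i\<in>{1..N}. x i) / real N)\<^sup>2)"

end

(* Call y lifted on S above m by g if y \<ge> m on all nodes and y \<ge> m + g on S. Updating a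
   node s that has an in-neighbour in S keeps y \<ge> m and adds s to S at the cost of shrinking
   g by the factor a, the least positive entry of A. Along a root of G(A) that is admissible at
   all times one can therefore, using (d), choose an admissible schedule on any window of N q
   steps that lifts every node; applied to x and to -x this shrinks max x - min x by the factor
   1 - a^(N q).

   By (b) and (c), given any past, sigma follows a prescribed admissible schedule on a window with
   probability at least alpha^(N q). So among m consecutive windows one follows its contracting
   schedule except with probability (1 - alpha^(N q))^m, and if this happens in each of K blocks
   the spread, which never increases, has shrunk by (1 - a^(N q))^K. The disagreement is at most
   N times the squared spread. *)

theory Submission
  imports Defs
begin

definition update :: "nat \<Rightarrow> (nat \<Rightarrow> nat \<Rightarrow> real) \<Rightarrow> nat \<Rightarrow> (nat \<Rightarrow> real) \<Rightarrow> nat \<Rightarrow> real" where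
  "update N A s y = mat_vec N (sel_mat A s) y"

fun run_updates :: "nat \<Rightarrow> (nat \<Rightarrow> nat \<Rightarrow> real) \<Rightarrow> (nat \<Rightarrow> nat) \<Rightarrow> nat \<Rightarrow> nat
    \<Rightarrow> (nat \<Rightarrow> real) \<Rightarrow> nat \<Rightarrow> real" where
  "run_updates N A s t 0 x = x"
| "run_updates N A s t (Suc n) x = update N A (s (t + n)) (run_updates N A s t n x)"

definition spread :: "nat \<Rightarrow> (nat \<Rightarrow> real) \<Rightarrow> real" where
  "spread N y = Max (y ` {1..N}) - Min (y ` {1..N})"

definition admissible :: "(nat \<Rightarrow> nat set) \<Rightarrow> nat \<Rightarrow> nat \<Rightarrow> (nat \<Rightarrow> nat) \<Rightarrow> bool" where
  "admissible I t n s \<longleftrightarrow> (\<forall>\<tau>\<in>{t..<t + n}. s \<tau> \<in> I \<tau>)"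

lemma update_apply:
  assumes "i \<in> {1..N}"
  shows "update N A s y i = (if i = s then (\<Sum>j\<in>{1..N}. A s j * y j) else y i)"
proof -
  have "update N A s y i = (\<Sum>j\<in>{1..N}. if i = s then A s j * y j else if i = j then y j else 0)"
    unfolding update_def mat_vec_def sel_mat_def by (intro sum.cong) auto
  then show ?thesis
    using assms by simp
qed

lemma update_uminus: "update N A s (\<lambda>i. - y i) = (\<lambda>i. - update N A s y i)"
  by (rule ext) (simp add: update_def mat_vec_def flip: sum_negf)

lemma run_updates_uminus: "run_updates N A s t n (\<lambda>i. - x i) = (\<lambda>i. - run_updates N A s t n x i)"
  by (induction n) (simp_all add: update_uminus)

lemma run_updates_cong:
  "(\<And>\<tau>. \<tau> \<in> {t..<t + n} \<Longrightarrow> s \<tau> = s' \<tau>) \<Longrightarrow> run_updates N A s t n x = run_updates N A s' t n x"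
  by (induction n) auto

lemma run_updates_add:
  "run_updates N A s t (n + m) x = run_updates N A s (t + n) m (run_updates N A s t n x)"
  by (induction m) (simp_all add: add.assoc)

lemma run_updates_append:
  "run_updates N A (\<lambda>\<tau>. if \<tau> < t + n then s1 \<tau> else s2 \<tau>) t (n + m) x
     = run_updates N A s2 (t + n) m (run_updates N A s1 t n x)"
proof -
  let ?s = "\<lambda>\<tau>. if \<tau> < t + n then s1 \<tau> else s2 \<tau>"
  have "run_updates N A ?s t (n + m) x = run_updates N A ?s (t + n) m (run_updates N A ?s t n x)"
    by (rule run_updates_add)
  also have "run_updates N A ?s t n x = run_updates N A s1 t n x"
    by (rule run_updates_cong) simp
  also have "run_updates N A ?s (t + n) m (run_updates N A s1 t n x)
      = run_updates N A s2 (t + n) m (run_updates N A s1 t n x)"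
    by (rule run_updates_cong) simp
  finally show ?thesis .
qed

lemma traj_eq_run_updates:
  assumes "1 \<le> t"
  shows "traj N A \<sigma> x1 (t + n) \<omega> = run_updates N A (\<lambda>\<tau>. \<sigma> \<tau> \<omega>) t n (traj N A \<sigma> x1 t \<omega>)"
  using assms by (induction n) (simp_all add: update_def)

lemma admissible_append:
  assumes "admissible I t n s1" "admissible I (t + n) m s2"
  shows "admissible I t (n + m) (\<lambda>\<tau>. if \<tau> < t + n then s1 \<tau> else s2 \<tau>)"
  using assms unfolding admissible_def by auto

lemma row_stochastic_entry_le_one:
  assumes "row_stochastic N A" "i \<in> {1..N}" "j \<in> {1..N}"
  shows "A i j \<le> 1"
proof -
  have "A i j \<le> (\<Sum>k\<in>{1..N}. A i k)"
    using assms by (intro member_le_sum) (auto simp: row_stochastic_def)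
  then show ?thesis
    using assms by (simp add: row_stochastic_def)
qed

lemma row_stochastic_weighted_sum_sub:
  assumes "row_stochastic N A" "s \<in> {1..N}"
  shows "(\<Sum>j\<in>{1..N}. A s j * y j) - m = (\<Sum>j\<in>{1..N}. A s j * (y j - m))"
  using assms by (simp add: row_stochastic_def right_diff_distrib sum_subtractf
      flip: sum_distrib_right)

lemma update_ge:
  assumes "row_stochastic N A" "s \<in> {1..N}" "\<And>j. j \<in> {1..N} \<Longrightarrow> m \<le> y j" "i \<in> {1..N}"
  shows "m \<le> update N A s y i"
proof -
  have "0 \<le> (\<Sum>j\<in>{1..N}. A s j * (y j - m))"
    using assms by (intro sum_nonneg) (auto simp: row_stochastic_def)
  then have "m \<le> (\<Sum>j\<in>{1..N}. A s j * y j)"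
    using row_stochastic_weighted_sum_sub[OF assms(1,2), of y m] by simp
  then show ?thesis
    using assms by (simp add: update_apply)
qed

lemma
  fixes N :: nat
  shows Min_le_apply: "i \<in> {1..N} \<Longrightarrow> Min (y ` {1..N}) \<le> y i"
    and apply_le_Max: "i \<in> {1..N} \<Longrightarrow> y i \<le> Max (y ` {1..N})"
  by (auto intro!: Min_le Max_ge)

lemma spread_le:
  assumes "1 \<le> N" "\<And>i. i \<in> {1..N} \<Longrightarrow> lo \<le> y i \<and> y i \<le> hi"
  shows "spread N y \<le> hi - lo"
proof -
  have "y ` {1..N} \<noteq> {}"
    using assms(1) by auto
  then have "Max (y ` {1..N}) \<le> hi" "lo \<le> Min (y ` {1..N})"
    using assms(2) by simp_all
  then show ?thesis
    unfolding spread_def by simp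
qed

lemma spread_nonneg: "1 \<le> N \<Longrightarrow> 0 \<le> spread N y"
  using Min_le_apply[of 1 N y] apply_le_Max[of 1 N y] by (simp add: spread_def)

lemma spread_update_le:
  assumes "row_stochastic N A" "1 \<le> N" "s \<in> {1..N}"
  shows "spread N (update N A s y) \<le> spread N y"
proof -
  have "Min (y ` {1..N}) \<le> update N A s y i" if "i \<in> {1..N}" for i
    using assms that by (intro update_ge Min_le_apply)
  moreover have "update N A s y i \<le> Max (y ` {1..N})" if "i \<in> {1..N}" for i
  proof -
    have "- Max (y ` {1..N}) \<le> update N A s (\<lambda>i. - y i) i"
      using assms that by (intro update_ge) (auto intro: apply_le_Max)
    then show ?thesis
      by (simp add: update_uminus)
  qed
  ultimately show ?thesis
    using spread_le[OF assms(2)] unfolding spread_def by blast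
qed

lemma spread_run_updates_le:
  assumes "row_stochastic N A" "1 \<le> N" "\<And>\<tau>. \<tau> \<in> {t..<t + n} \<Longrightarrow> s \<tau> \<in> {1..N}"
  shows "spread N (run_updates N A s t n x) \<le> spread N x"
  using assms(3)
proof (induction n)
  case (Suc n)
  then have "spread N (run_updates N A s t (Suc n) x) \<le> spread N (run_updates N A s t n x)"
    using spread_update_le[OF assms(1,2)] by simp
  also have "\<dots> \<le> spread N x"
    using Suc by simp
  finally show ?case .
qed simp

lemma disagreement_le_spread:
  assumes "1 \<le> N"
  shows "disagreement N x \<le> real N * (spread N x)\<^sup>2"
proof -
  let ?m = "Min (x ` {1..N})" and ?M = "Max (x ` {1..N})" and ?avg = "(\<Sum>i\<in>{1..N}. x i) / real N"
  have "real N * ?m \<le> (\<Sum>i\<in>{1..N}. x i)" "(\<Sum>i\<in>{1..N}. x i) \<le> real N * ?M"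
    using sum_mono[of "{1..N}" "\<lambda>_. ?m" x] sum_mono[of "{1..N}" x "\<lambda>_. ?M"]
    by (auto intro: Min_le_apply apply_le_Max)
  then have avg: "?m \<le> ?avg" "?avg \<le> ?M"
    using assms by (simp_all add: field_simps)
  have "(x j - ?avg)\<^sup>2 \<le> (spread N x)\<^sup>2" if "j \<in> {1..N}" for j
  proof -
    have "\<bar>x j - ?avg\<bar> \<le> spread N x"
      using avg Min_le_apply[OF that, of x] apply_le_Max[OF that, of x] unfolding spread_def
      by linarith
    then show ?thesis
      by (metis abs_ge_zero power2_abs power_mono)
  qed
  then have "disagreement N x \<le> (\<Sum>j\<in>{1..N}. (spread N x)\<^sup>2)"
    unfolding disagreement_def by (intro sum_mono)
  then show ?thesis
    by simp
qed

definition lifted :: "nat \<Rightarrow> real \<Rightarrow> real \<Rightarrow> nat set \<Rightarrow> (nat \<Rightarrow> real) \<Rightarrow> bool" where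
  "lifted N m g S y \<longleftrightarrow> (\<forall>i\<in>{1..N}. m \<le> y i) \<and> (\<forall>i\<in>S. m + g \<le> y i)"

lemma lifted_subset: "lifted N m g S y \<Longrightarrow> S' \<subseteq> S \<Longrightarrow> lifted N m g S' y"
  unfolding lifted_def by blast

lemma lifted_update:
  assumes A: "row_stochastic N A" and y: "lifted N m g S y" and S: "S \<subseteq> {1..N}"
    and s: "s \<in> {1..N}" and j: "j \<in> S" and g: "0 \<le> g" and a: "a \<le> A s j"
  shows "lifted N m (a * g) (insert s S) (update N A s y)"
  unfolding lifted_def
proof (intro conjI ballI)
  fix i assume "i \<in> {1..N}"
  then show "m \<le> update N A s y i"
    using y A s unfolding lifted_def by (intro update_ge) auto
next
  have jV: "j \<in> {1..N}" and Asj: "0 \<le> A s j" "A s j \<le> 1"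
    using A S s j row_stochastic_entry_le_one by (auto simp: row_stochastic_def)
  fix i assume i: "i \<in> insert s S"
  show "m + a * g \<le> update N A s y i"
  proof (cases "i = s")
    case True
    have "a * g \<le> A s j * (y j - m)"
      using y j a g Asj unfolding lifted_def by (intro mult_mono) auto
    also have "\<dots> \<le> (\<Sum>k\<in>{1..N}. A s k * (y k - m))"
      using y A s jV unfolding lifted_def by (intro member_le_sum) (auto simp: row_stochastic_def)
    also have "\<dots> = update N A s y i - m"
      using True s row_stochastic_weighted_sum_sub[OF A s, of y m] by (simp add: update_apply)
    finally show ?thesis by simp
  next
    case False
    then have "i \<in> S" "update N A s y i = y i"
      using i S by (auto simp: update_apply)
    moreover have "a * g \<le> g"
      using mult_right_mono[of a 1 g] a Asj g by simp
    ultimately show ?thesis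
      using y unfolding lifted_def by force
  qed
qed

lemma lifted_run_updates:
  assumes A: "row_stochastic N A" and y: "lifted N m g S y" and S: "S \<subseteq> {1..N}"
    and g: "0 \<le> g" and a: "0 \<le> a"
    and steps: "\<And>\<tau>. \<tau> \<in> {t..<t + n} \<Longrightarrow> s \<tau> \<in> {1..N} \<and> (\<exists>j\<in>S. a \<le> A (s \<tau>) j)"
  shows "lifted N m (a ^ n * g) (S \<union> s ` {t..<t + n}) (run_updates N A s t n y)"
  using steps
proof (induction n)
  case (Suc n)
  have IH: "lifted N m (a ^ n * g) (S \<union> s ` {t..<t + n}) (run_updates N A s t n y)"
    using Suc by simp
  have "t + n \<in> {t..<t + Suc n}"
    by simp
  then obtain j where sV: "s (t + n) \<in> {1..N}" and j: "j \<in> S" "a \<le> A (s (t + n)) j"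
    using Suc.prems by blast
  have "S \<union> s ` {t..<t + n} \<subseteq> {1..N}"
    using S Suc.prems by auto
  from lifted_update[OF A IH this sV _ _ j(2)]
  have "lifted N m (a * (a ^ n * g)) (insert (s (t + n)) (S \<union> s ` {t..<t + n}))
      (run_updates N A s t (Suc n) y)"
    using j(1) a g by simp
  moreover have "insert (s (t + n)) (S \<union> s ` {t..<t + n}) = S \<union> s ` {t..<t + Suc n}"
    by (auto simp: less_Suc_eq)
  ultimately show ?case
    by (simp add: mult.assoc)
qed (use y in simp)

lemma spread_le_of_lifted:
  assumes N: "1 \<le> N" and \<rho>: "\<rho> \<in> {1..N}"
    and lift: "\<And>m g y. lifted N m g {\<rho>} y \<Longrightarrow> 0 \<le> g \<Longrightarrow> lifted N m (c * g) {1..N} (f y)"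
    and uminus: "\<And>y. f (\<lambda>i. - y i) = (\<lambda>i. - f y i)"
  shows "spread N (f x) \<le> (1 - c) * spread N x"
proof -
  let ?m = "Min (x ` {1..N})" and ?M = "Max (x ` {1..N})"
  have bounds: "?m \<le> x i" "x i \<le> ?M" if "i \<in> {1..N}" for i
    using that by (simp_all add: Min_le_apply apply_le_Max)
  have "lifted N ?m (x \<rho> - ?m) {\<rho>} x" "lifted N (- ?M) (?M - x \<rho>) {\<rho>} (\<lambda>i. - x i)"
    using bounds unfolding lifted_def by auto
  then have lo: "lifted N ?m (c * (x \<rho> - ?m)) {1..N} (f x)"
    and hi: "lifted N (- ?M) (c * (?M - x \<rho>)) {1..N} (\<lambda>i. - f x i)"
    using lift[of ?m _ x] lift[of "- ?M" _ "\<lambda>i. - x i"] bounds[OF \<rho>] by (simp_all add: uminus)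
  have "?m + c * (x \<rho> - ?m) \<le> f x i \<and> f x i \<le> ?M - c * (?M - x \<rho>)" if "i \<in> {1..N}" for i
  proof -
    have "?m + c * (x \<rho> - ?m) \<le> f x i" "- ?M + c * (?M - x \<rho>) \<le> - f x i"
      using lo hi that unfolding lifted_def by blast+
    then show ?thesis
      by linarith
  qed
  then have "spread N (f x) \<le> (?M - c * (?M - x \<rho>)) - (?m + c * (x \<rho> - ?m))"
    by (rule spread_le[OF N])
  also have "\<dots> = (1 - c) * spread N x"
    by (simp add: spread_def algebra_simps)
  finally show ?thesis .
qed

lemma rtranclp_leaves_set:
  assumes "R\<^sup>*\<^sup>* u v" "u \<in> S" "v \<notin> S"
  shows "\<exists>x y. x \<in> S \<and> y \<notin> S \<and> R x y"
  using assms
proof (induction rule: rtranclp_induct)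
  case (step y z)
  then show ?case
    by (cases "y \<in> S") blast+
qed simp

(* The extra element 1 keeps the minimum defined and at most 1. *)
definition min_pos_entry :: "nat \<Rightarrow> (nat \<Rightarrow> nat \<Rightarrow> real) \<Rightarrow> real" where
  "min_pos_entry N A = Min (insert 1 {A i j | i j. i \<in> {1..N} \<and> j \<in> {1..N} \<and> 0 < A i j})"

lemma finite_pos_entries:
  fixes A :: "nat \<Rightarrow> nat \<Rightarrow> real"
  shows "finite {A i j | i j. i \<in> {1..N} \<and> j \<in> {1..N} \<and> 0 < A i j}"
  by (rule finite_subset[of _ "(\<lambda>(i, j). A i j) ` ({1..N} \<times> {1..N})"]) auto

lemma min_pos_entry_pos: "0 < min_pos_entry N A"
  unfolding min_pos_entry_def using finite_pos_entries by (subst Min_gr_iff) auto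

lemma min_pos_entry_le:
  "i \<in> {1..N} \<Longrightarrow> j \<in> {1..N} \<Longrightarrow> 0 < A i j \<Longrightarrow> min_pos_entry N A \<le> A i j"
  unfolding min_pos_entry_def using finite_pos_entries by (intro Min_le) auto

lemma min_pos_entry_le_one: "min_pos_entry N A \<le> 1"
  unfolding min_pos_entry_def using finite_pos_entries by (intro Min_le) auto

lemma card_insert_ge_min:
  assumes "S \<subseteq> {1..N}" "v \<in> {1..N}" "S \<noteq> {1..N} \<Longrightarrow> v \<notin> S"
  shows "min N (card S + 1) \<le> card (insert v S)"
proof (cases "S = {1..N}")
  case True
  then show ?thesis
    using assms(2) by (simp add: insert_absorb)
next
  case False
  then show ?thesis
    using assms finite_subset[OF assms(1)] by simp
qed

locale rooted_schedule =
  fixes N :: nat and A :: "nat \<Rightarrow> nat \<Rightarrow> real" and I :: "nat \<Rightarrow> nat set" and q r :: nat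
  assumes stochastic: "row_stochastic N A"
    and q_pos: "0 < q"
    and cover: "\<And>k. 1 \<le> k \<Longrightarrow> (\<Union>\<tau>\<in>{k..k + q - 1}. I \<tau>) = {1..N}"
    and root: "r \<in> roots N A"
    and root_admissible: "\<And>k. 1 \<le> k \<Longrightarrow> r \<in> I k"
begin

definition contraction :: real where
  "contraction = 1 - min_pos_entry N A ^ (N * q)"

lemma contraction_bounds: "0 \<le> contraction" "contraction < 1"
  using min_pos_entry_pos[of N A] min_pos_entry_le_one[of N A]
  by (simp_all add: contraction_def power_le_one)

lemma root_node: "r \<in> {1..N}"
  using root by (simp add: roots_def)

lemma N_pos: "1 \<le> N"
  using root_node by simp

(* rho is an in-neighbour of the root, hence reaches every node; while rho stays lifted, the
   root can be updated at any time without losing the lift. *)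
definition \<rho> :: nat where
  "\<rho> = (SOME j. j \<in> {1..N} \<and> 0 < A r j)"

lemma \<rho>: "\<rho> \<in> {1..N}" "0 < A r \<rho>"
proof -
  have "(\<Sum>j\<in>{1..N}. A r j) \<noteq> 0"
    using stochastic root_node by (simp add: row_stochastic_def)
  then obtain j where j: "j \<in> {1..N}" "A r j \<noteq> 0"
    using sum.neutral[of "{1..N}" "A r"] by blast
  moreover have "0 \<le> A r j"
    using stochastic root_node j unfolding row_stochastic_def by blast
  ultimately have "\<exists>j. j \<in> {1..N} \<and> 0 < A r j"
    by auto
  then show "\<rho> \<in> {1..N}" "0 < A r \<rho>"
    unfolding \<rho>_def by (metis (mono_tags, lifting) someI_ex)+
qed

lemma \<rho>_reaches: "v \<in> {1..N} \<Longrightarrow> (gedge N A)\<^sup>*\<^sup>* \<rho> v"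
  using root \<rho> root_node
  by (auto simp: roots_def gedge_def intro: converse_rtranclp_into_rtranclp)

lemma ex_entry_node:
  assumes \<rho>S: "\<rho> \<in> S" and S: "S \<subseteq> {1..N}" and t: "1 \<le> t"
  obtains v u \<tau>\<^sub>0 where "v \<in> {1..N}" "S \<noteq> {1..N} \<Longrightarrow> v \<notin> S" "u \<in> S" "0 < A v u"
    "\<tau>\<^sub>0 \<in> {t..<t + q}" "v \<in> I \<tau>\<^sub>0"
proof (cases "S = {1..N}")
  case True
  then show ?thesis
    using that[of r \<rho> t] root_node \<rho> \<rho>S q_pos root_admissible[OF t] by simp
next
  case False
  then obtain w where "w \<in> {1..N}" "w \<notin> S"
    using S by blast
  then obtain u v where uv: "u \<in> S" "v \<notin> S" "gedge N A u v"
    using rtranclp_leaves_set[OF \<rho>_reaches \<rho>S] by blast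
  then have "v \<in> (\<Union>\<tau>\<in>{t..t + q - 1}. I \<tau>)"
    using cover[OF t] by (simp add: gedge_def)
  then obtain \<tau>\<^sub>0 where \<tau>\<^sub>0: "\<tau>\<^sub>0 \<in> {t..t + q - 1}" "v \<in> I \<tau>\<^sub>0"
    by blast
  then have "\<tau>\<^sub>0 \<in> {t..<t + q}"
    using q_pos by auto
  then show ?thesis
    using that[of v u \<tau>\<^sub>0] uv \<tau>\<^sub>0(2) by (simp add: gedge_def)
qed

lemma lifting_stage:
  assumes \<rho>S: "\<rho> \<in> S" and S: "S \<subseteq> {1..N}" and t: "1 \<le> t"
  obtains s v where "admissible I t q s" "v \<in> {1..N}" "S \<noteq> {1..N} \<Longrightarrow> v \<notin> S"
    "\<And>m g y. lifted N m g S y \<Longrightarrow> 0 \<le> g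
       \<Longrightarrow> lifted N m (min_pos_entry N A ^ q * g) (insert v S) (run_updates N A s t q y)"
proof -
  obtain v u \<tau>\<^sub>0 where v: "v \<in> {1..N}" "S \<noteq> {1..N} \<Longrightarrow> v \<notin> S" and u: "u \<in> S" "0 < A v u"
    and \<tau>\<^sub>0: "\<tau>\<^sub>0 \<in> {t..<t + q}" "v \<in> I \<tau>\<^sub>0"
    using ex_entry_node[OF \<rho>S S t] by blast
  define s where "s \<tau> = (if \<tau> = \<tau>\<^sub>0 then v else r)" for \<tau>
  have "admissible I t q s"
    using \<tau>\<^sub>0 root_admissible t by (auto simp: admissible_def s_def)
  moreover have "lifted N m (min_pos_entry N A ^ q * g) (insert v S) (run_updates N A s t q y)"
    if "lifted N m g S y" "0 \<le> g" for m g y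
  proof -
    have "min_pos_entry N A \<le> A v u" "min_pos_entry N A \<le> A r \<rho>"
      using v u \<rho> S root_node by (auto intro!: min_pos_entry_le)
    then have "s \<tau> \<in> {1..N} \<and> (\<exists>j\<in>S. min_pos_entry N A \<le> A (s \<tau>) j)" for \<tau>
      using v u \<rho>S root_node by (auto simp: s_def)
    then have "lifted N m (min_pos_entry N A ^ q * g) (S \<union> s ` {t..<t + q}) (run_updates N A s t q y)"
      using that S min_pos_entry_pos[of N A] by (intro lifted_run_updates[OF stochastic]) auto
    moreover have "insert v S \<subseteq> S \<union> s ` {t..<t + q}"
      using \<tau>\<^sub>0 by (auto simp: s_def)
    ultimately show ?thesis
      by (rule lifted_subset)
  qed
  ultimately show ?thesis
    using that v by blast
qed

lemma lifting_stages:
  assumes t: "1 \<le> t"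
  shows "\<exists>s S. \<rho> \<in> S \<and> S \<subseteq> {1..N} \<and> min N (n + 1) \<le> card S \<and> admissible I t (n * q) s \<and>
    (\<forall>m g y. lifted N m g {\<rho>} y \<longrightarrow> 0 \<le> g \<longrightarrow>
       lifted N m (min_pos_entry N A ^ (n * q) * g) S (run_updates N A s t (n * q) y))"
proof (induction n)
  case 0
  show ?case
    by (intro exI[of _ "\<lambda>_. r"] exI[of _ "{\<rho>}"]) (use \<rho> in \<open>auto simp: admissible_def\<close>)
next
  case (Suc n)
  then obtain s S where \<rho>S: "\<rho> \<in> S" and S: "S \<subseteq> {1..N}" and card: "min N (n + 1) \<le> card S"
    and adm: "admissible I t (n * q) s"
    and lift: "\<forall>m g y. lifted N m g {\<rho>} y \<longrightarrow> 0 \<le> g \<longrightarrow>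
      lifted N m (min_pos_entry N A ^ (n * q) * g) S (run_updates N A s t (n * q) y)"
    by blast
  have "1 \<le> t + n * q"
    using t by simp
  then obtain s' v where adm': "admissible I (t + n * q) q s'" and v: "v \<in> {1..N}" "S \<noteq> {1..N} \<Longrightarrow> v \<notin> S"
    and lift': "\<And>m g y. lifted N m g S y \<Longrightarrow> 0 \<le> g
      \<Longrightarrow> lifted N m (min_pos_entry N A ^ q * g) (insert v S) (run_updates N A s' (t + n * q) q y)"
    using lifting_stage[OF \<rho>S S] by blast
  define s'' where "s'' \<tau> = (if \<tau> < t + n * q then s \<tau> else s' \<tau>)" for \<tau>
  have len: "Suc n * q = n * q + q"
    by simp
  have "min N (Suc n + 1) \<le> card (insert v S)"
    using card card_insert_ge_min[OF S v] by linarith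
  moreover have "admissible I t (Suc n * q) s''"
    unfolding len s''_def by (rule admissible_append[OF adm adm'])
  moreover have "lifted N m (min_pos_entry N A ^ (Suc n * q) * g) (insert v S)
      (run_updates N A s'' t (Suc n * q) y)" if "lifted N m g {\<rho>} y" "0 \<le> g" for m g y
  proof -
    have "0 \<le> min_pos_entry N A ^ (n * q) * g"
      using min_pos_entry_pos[of N A] that(2) by simp
    from lift'[OF lift[rule_format, OF that] this]
    show ?thesis
      unfolding len s''_def run_updates_append by (simp add: power_add ac_simps)
  qed
  ultimately show ?case
    using \<rho>S S v by (intro exI[of _ s''] exI[of _ "insert v S"]) auto
qed

lemma ex_contracting_schedule:
  assumes "1 \<le> t"
  shows "\<exists>s. admissible I t (N * q) s \<and>
    (\<forall>x. spread N (run_updates N A s t (N * q) x) \<le> contraction * spread N x)"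
proof -
  obtain s S where S: "S \<subseteq> {1..N}" "N \<le> card S" and adm: "admissible I t (N * q) s"
    and lift: "\<And>m g y. lifted N m g {\<rho>} y \<Longrightarrow> 0 \<le> g
      \<Longrightarrow> lifted N m (min_pos_entry N A ^ (N * q) * g) S (run_updates N A s t (N * q) y)"
    using lifting_stages[OF assms, of N] by auto
  have "S = {1..N}"
    using S by (intro card_subset_eq) (auto dest: card_mono[rotated])
  then show ?thesis
    using adm spread_le_of_lifted[OF N_pos \<rho>(1)] lift run_updates_uminus
    unfolding contraction_def by blast
qed

end

locale selection_process = prob_space M for M :: "'a measure" +
  fixes N :: nat and \<sigma> :: "nat \<Rightarrow> 'a \<Rightarrow> nat" and I :: "nat \<Rightarrow> nat set" and \<alpha> :: real
  assumes \<sigma>_measurable: "\<And>k. 1 \<le> k \<Longrightarrow> \<sigma> k \<in> measurable M (count_space UNIV)"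
    and \<sigma>_nodes: "\<And>k \<omega>. 1 \<le> k \<Longrightarrow> \<omega> \<in> space M \<Longrightarrow> \<sigma> k \<omega> \<in> {1..N}"
    and \<alpha>_pos: "0 < \<alpha>" and \<alpha>_le_1: "\<alpha> \<le> 1"
    and cond_prob_ge: "\<And>k v s. 1 \<le> k \<Longrightarrow> 0 < measure M (past_event M \<sigma> k v)
      \<Longrightarrow> cond_prob M \<sigma> k s v \<noteq> 0 \<Longrightarrow> \<alpha> \<le> cond_prob M \<sigma> k s v"
    and cond_prob_support: "\<And>k v. 1 \<le> k \<Longrightarrow> (\<forall>i\<in>{1..<k}. v i \<in> {1..N})
      \<Longrightarrow> 0 < measure M (past_event M \<sigma> k v) \<Longrightarrow> {s\<in>{1..N}. cond_prob M \<sigma> k s v \<noteq> 0} = I k"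
begin

definition history :: "nat \<Rightarrow> 'a \<Rightarrow> nat \<Rightarrow> nat" where
  "history t \<omega> = (\<lambda>i\<in>{1..<t}. \<sigma> i \<omega>)"

abbreviation histories :: "nat \<Rightarrow> (nat \<Rightarrow> nat) set" where
  "histories t \<equiv> {1..<t} \<rightarrow>\<^sub>E {1..N}"

definition past_determined :: "nat \<Rightarrow> 'a set \<Rightarrow> bool" where
  "past_determined t E \<longleftrightarrow> (\<exists>P. E = {\<omega>\<in>space M. P (history t \<omega>)})"

lemma history_in_histories: "\<omega> \<in> space M \<Longrightarrow> history t \<omega> \<in> histories t"
  unfolding history_def using \<sigma>_nodes by auto

lemma sets_\<sigma>_eq: "1 \<le> k \<Longrightarrow> {\<omega>\<in>space M. \<sigma> k \<omega> = s} \<in> sets M"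
  using measurable_sets[OF \<sigma>_measurable, of k "{s}"] by (simp add: vimage_def Int_def conj_commute)

lemma sets_past_event: "past_event M \<sigma> t v \<in> sets M"
  unfolding past_event_def using sets_\<sigma>_eq by (intro sets.sets_Collect_finite_All) auto

lemma history_fiber_eq_past_event:
  assumes "v \<in> histories t"
  shows "{\<omega>\<in>space M. history t \<omega> = v} = past_event M \<sigma> t v"
proof -
  have "history t \<omega> = v \<longleftrightarrow> (\<forall>i\<in>{1..<t}. \<sigma> i \<omega> = v i)" for \<omega>
    using assms unfolding history_def by (metis PiE_restrict restrict_apply' restrict_ext)
  then show ?thesis
    unfolding past_event_def by blast
qed

lemma finite_histories: "finite (histories t)"
  by (auto intro: finite_PiE)

lemma past_determined_eq_Union:
  assumes "past_determined t E"
  obtains B where "B \<subseteq> histories t" "E = (\<Union>v\<in>B. past_event M \<sigma> t v)"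
proof -
  obtain P where E: "E = {\<omega>\<in>space M. P (history t \<omega>)}"
    using assms unfolding past_determined_def by blast
  have "E = (\<Union>v\<in>{v\<in>histories t. P v}. {\<omega>\<in>space M. history t \<omega> = v})"
    using history_in_histories by (auto simp: E)
  then show ?thesis
    using that[of "{v\<in>histories t. P v}"] history_fiber_eq_past_event by simp
qed

lemma past_determined_sets:
  assumes "past_determined t E"
  shows "E \<in> sets M"
proof -
  obtain B where "B \<subseteq> histories t" "E = (\<Union>v\<in>B. past_event M \<sigma> t v)"
    using past_determined_eq_Union[OF assms] .
  then show ?thesis
    using finite_subset[OF _ finite_histories] sets_past_event by auto
qed

lemma measure_Union_past_events:
  assumes "B \<subseteq> histories t" "\<And>v. v \<in> B \<Longrightarrow> F v \<subseteq> past_event M \<sigma> t v"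
    "\<And>v. v \<in> B \<Longrightarrow> F v \<in> sets M"
  shows "measure M (\<Union>v\<in>B. F v) = (\<Sum>v\<in>B. measure M (F v))"
proof (rule finite_measure_finite_Union)
  show "finite B"
    using assms(1) finite_histories by (rule finite_subset)
  have "F v \<subseteq> {\<omega>\<in>space M. history t \<omega> = v}" if "v \<in> B" for v
    using assms(1,2) that history_fiber_eq_past_event by blast
  then show "disjoint_family_on F B"
    unfolding disjoint_family_on_def by blast
qed (use assms(3) in auto)

lemma past_determined_space: "past_determined t (space M)"
  unfolding past_determined_def by (rule exI[of _ "\<lambda>_. True"]) simp

lemma past_determined_Int: "past_determined t E \<Longrightarrow> past_determined t F \<Longrightarrow> past_determined t (E \<inter> F)"
  unfolding past_determined_def by (elim exE, rule_tac x = "\<lambda>h. P h \<and> Pa h" in exI) auto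

lemma past_determined_Diff: "past_determined t E \<Longrightarrow> past_determined t F \<Longrightarrow> past_determined t (E - F)"
  unfolding past_determined_def by (elim exE, rule_tac x = "\<lambda>h. P h \<and> \<not> Pa h" in exI) auto

lemma past_determined_mono:
  assumes "past_determined t E" "t \<le> t'"
  shows "past_determined t' E"
proof -
  obtain P where "E = {\<omega>\<in>space M. P (history t \<omega>)}"
    using assms(1) unfolding past_determined_def by blast
  moreover have "history t \<omega> = restrict (history t' \<omega>) {1..<t}" for \<omega>
    using assms(2) by (auto simp: history_def)
  ultimately show ?thesis
    unfolding past_determined_def by (intro exI[of _ "\<lambda>h. P (restrict h {1..<t})"]) simp
qed

lemma past_determined_follow_schedule:
  assumes "1 \<le> t"
  shows "past_determined (t + n) {\<omega>\<in>space M. \<forall>\<tau>\<in>{t..<t + n}. \<sigma> \<tau> \<omega> = s \<tau>}"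
proof -
  have "(\<forall>\<tau>\<in>{t..<t + n}. \<sigma> \<tau> \<omega> = s \<tau>) \<longleftrightarrow> (\<forall>\<tau>\<in>{t..<t + n}. history (t + n) \<omega> \<tau> = s \<tau>)" for \<omega>
    using assms by (simp add: history_def)
  then show ?thesis
    unfolding past_determined_def by (intro exI[of _ "\<lambda>h. \<forall>\<tau>\<in>{t..<t + n}. h \<tau> = s \<tau>"]) simp
qed

lemma measure_past_event_select_ge:
  assumes t: "1 \<le> t" and s: "s \<in> I t" and v: "v \<in> histories t"
  shows "\<alpha> * measure M (past_event M \<sigma> t v)
    \<le> measure M (past_event M \<sigma> t v \<inter> {\<omega>\<in>space M. \<sigma> t \<omega> = s})"
proof (cases "measure M (past_event M \<sigma> t v) = 0")
  case False
  then have pos: "0 < measure M (past_event M \<sigma> t v)"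
    by (metis measure_nonneg order_le_less)
  moreover have "\<forall>i\<in>{1..<t}. v i \<in> {1..N}"
    using v by blast
  ultimately have "s \<in> {s\<in>{1..N}. cond_prob M \<sigma> t s v \<noteq> 0}"
    using cond_prob_support[OF t] s by blast
  then have "\<alpha> \<le> cond_prob M \<sigma> t s v"
    using cond_prob_ge[OF t pos] by simp
  then have "\<alpha> * measure M (past_event M \<sigma> t v)
      \<le> cond_prob M \<sigma> t s v * measure M (past_event M \<sigma> t v)"
    by (simp add: mult_right_mono)
  also have "\<dots> = measure M {\<omega>\<in>past_event M \<sigma> t v. \<sigma> t \<omega> = s}"
    using pos by (simp add: cond_prob_def)
  also have "{\<omega>\<in>past_event M \<sigma> t v. \<sigma> t \<omega> = s} = past_event M \<sigma> t v \<inter> {\<omega>\<in>space M. \<sigma> t \<omega> = s}"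
    by (auto simp: past_event_def)
  finally show ?thesis .
qed simp

lemma measure_select_ge:
  assumes t: "1 \<le> t" and s: "s \<in> I t" and E: "past_determined t E"
  shows "\<alpha> * measure M E \<le> measure M (E \<inter> {\<omega>\<in>space M. \<sigma> t \<omega> = s})"
proof -
  let ?S = "{\<omega>\<in>space M. \<sigma> t \<omega> = s}"
  obtain B where B: "B \<subseteq> histories t" and E: "E = (\<Union>v\<in>B. past_event M \<sigma> t v)"
    using past_determined_eq_Union[OF E] .
  have "\<alpha> * measure M E = (\<Sum>v\<in>B. \<alpha> * measure M (past_event M \<sigma> t v))"
    unfolding E using B sets_past_event
    by (subst measure_Union_past_events) (auto simp: sum_distrib_left)
  also have "\<dots> \<le> (\<Sum>v\<in>B. measure M (past_event M \<sigma> t v \<inter> ?S))"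
    using B by (intro sum_mono measure_past_event_select_ge[OF t s]) auto
  also have "\<dots> = measure M (\<Union>v\<in>B. past_event M \<sigma> t v \<inter> ?S)"
    using B sets_past_event sets_\<sigma>_eq[OF t] by (subst measure_Union_past_events) auto
  also have "(\<Union>v\<in>B. past_event M \<sigma> t v \<inter> ?S) = E \<inter> ?S"
    unfolding E by blast
  finally show ?thesis .
qed

lemma measure_follow_schedule_ge:
  assumes t: "1 \<le> t" and E: "past_determined t E" and s: "admissible I t n s"
  shows "\<alpha> ^ n * measure M E \<le> measure M (E \<inter> {\<omega>\<in>space M. \<forall>\<tau>\<in>{t..<t + n}. \<sigma> \<tau> \<omega> = s \<tau>})"
  using s
proof (induction n)
  case (Suc n)
  let ?E = "E \<inter> {\<omega>\<in>space M. \<forall>\<tau>\<in>{t..<t + n}. \<sigma> \<tau> \<omega> = s \<tau>}"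
  have "past_determined (t + n) ?E"
    using past_determined_mono[OF E] past_determined_follow_schedule[OF t] by (intro past_determined_Int) auto
  moreover have "s (t + n) \<in> I (t + n)"
    using Suc.prems by (simp add: admissible_def)
  ultimately have step: "\<alpha> * measure M ?E \<le> measure M (?E \<inter> {\<omega>\<in>space M. \<sigma> (t + n) \<omega> = s (t + n)})"
    using t by (intro measure_select_ge) auto
  have "\<alpha> ^ Suc n * measure M E = \<alpha> * (\<alpha> ^ n * measure M E)"
    by simp
  also have "\<dots> \<le> \<alpha> * measure M ?E"
    using Suc \<alpha>_pos by (intro mult_left_mono) (auto simp: admissible_def)
  also have "\<dots> \<le> measure M (?E \<inter> {\<omega>\<in>space M. \<sigma> (t + n) \<omega> = s (t + n)})"
    by (rule step)
  also have "?E \<inter> {\<omega>\<in>space M. \<sigma> (t + n) \<omega> = s (t + n)}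
      = E \<inter> {\<omega>\<in>space M. \<forall>\<tau>\<in>{t..<t + Suc n}. \<sigma> \<tau> \<omega> = s \<tau>}"
    by (auto simp: less_Suc_eq)
  finally show ?case .
qed (use past_determined_sets[OF E] in \<open>simp add: Int_absorb2 sets.sets_into_space\<close>)

lemma measure_avoid_all_le:
  fixes G :: "nat \<Rightarrow> 'a set" and w :: "nat \<Rightarrow> nat"
  assumes w: "mono w" and G: "\<And>j. past_determined (w (Suc j)) (G j)"
    and bound: "\<And>j E. past_determined (w j) E \<Longrightarrow> \<beta> * measure M E \<le> measure M (E \<inter> G j)"
    and \<beta>: "\<beta> \<le> 1"
  shows "past_determined (w i) E \<Longrightarrow> measure M (E - (\<Union>j\<in>{i..<i + m}. G j)) \<le> (1 - \<beta>) ^ m * measure M E"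
proof (induction m arbitrary: i E)
  case (Suc m)
  have past_Gi: "past_determined (w (Suc i)) (E - G i)"
    using past_determined_mono[OF Suc.prems] monoD[OF w] G by (intro past_determined_Diff) auto
  have "measure M (E - G i) = measure M E - measure M (E \<inter> G i)"
    using past_determined_sets Suc.prems G by (intro finite_measure_Diff') auto
  also have "\<dots> \<le> (1 - \<beta>) * measure M E"
    using bound[OF Suc.prems] by (simp add: algebra_simps)
  finally have Gi: "measure M (E - G i) \<le> (1 - \<beta>) * measure M E" .
  have "measure M ((E - G i) - (\<Union>j\<in>{Suc i..<Suc i + m}. G j)) \<le> (1 - \<beta>) ^ m * measure M (E - G i)"
    by (rule Suc.IH[OF past_Gi])
  also have "\<dots> \<le> (1 - \<beta>) ^ m * ((1 - \<beta>) * measure M E)"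
    using Gi \<beta> by (simp add: mult_left_mono)
  also have "\<dots> = (1 - \<beta>) ^ Suc m * measure M E"
    by (simp only: power_Suc2 mult.assoc)
  finally have "measure M ((E - G i) - (\<Union>j\<in>{Suc i..<Suc i + m}. G j)) \<le> (1 - \<beta>) ^ Suc m * measure M E" .
  moreover have "{i..<i + Suc m} = insert i {Suc i..<Suc i + m}"
    by auto
  then have "E - (\<Union>j\<in>{i..<i + Suc m}. G j) = (E - G i) - (\<Union>j\<in>{Suc i..<Suc i + m}. G j)"
    by (simp add: Diff_eq Int_assoc)
  ultimately show ?case
    by simp
qed simp

end

locale consensus_process = rooted_schedule N A I q r + selection_process M N \<sigma> I \<alpha>
  for N A I q r and M :: "'a measure" and \<sigma> \<alpha>
begin

definition window_start :: "nat \<Rightarrow> nat" where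
  "window_start j = 1 + j * (N * q)"

definition window_schedule :: "nat \<Rightarrow> nat \<Rightarrow> nat" where
  "window_schedule t = (SOME s. admissible I t (N * q) s \<and>
     (\<forall>x. spread N (run_updates N A s t (N * q) x) \<le> contraction * spread N x))"

definition good_window :: "nat \<Rightarrow> 'a set" where
  "good_window j = {\<omega>\<in>space M. \<forall>\<tau>\<in>{window_start j..<window_start j + N * q}.
     \<sigma> \<tau> \<omega> = window_schedule (window_start j) \<tau>}"

lemma window_schedule:
  assumes "1 \<le> t"
  shows "admissible I t (N * q) (window_schedule t)"
    "spread N (run_updates N A (window_schedule t) t (N * q) x)
       \<le> contraction * spread N x"
  using someI_ex[OF ex_contracting_schedule[OF assms]] unfolding window_schedule_def by blast+

lemma window_start_Suc: "window_start (Suc j) = window_start j + N * q"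
  by (simp add: window_start_def)

lemma mono_window_start: "mono window_start"
  by (rule monoI) (simp add: window_start_def mult_le_mono1)

lemma spread_traj_antimono:
  assumes "\<omega> \<in> space M" "1 \<le> k" "k \<le> k'"
  shows "spread N (traj N A \<sigma> x1 k' \<omega>) \<le> spread N (traj N A \<sigma> x1 k \<omega>)"
proof -
  have "traj N A \<sigma> x1 k' \<omega> = run_updates N A (\<lambda>\<tau>. \<sigma> \<tau> \<omega>) k (k' - k) (traj N A \<sigma> x1 k \<omega>)"
    using traj_eq_run_updates[OF assms(2), of N A \<sigma> x1 "k' - k"] assms(3) by simp
  then show ?thesis
    using assms \<sigma>_nodes by (auto intro!: spread_run_updates_le[OF stochastic N_pos])
qed

lemma spread_traj_good_window:
  assumes "\<omega> \<in> good_window j"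
  shows "spread N (traj N A \<sigma> x1 (window_start (Suc j)) \<omega>)
    \<le> contraction * spread N (traj N A \<sigma> x1 (window_start j) \<omega>)"
proof -
  have start: "1 \<le> window_start j"
    by (simp add: window_start_def)
  have "traj N A \<sigma> x1 (window_start (Suc j)) \<omega>
      = run_updates N A (\<lambda>\<tau>. \<sigma> \<tau> \<omega>) (window_start j) (N * q) (traj N A \<sigma> x1 (window_start j) \<omega>)"
    unfolding window_start_Suc by (rule traj_eq_run_updates[OF start])
  also have "\<dots> = run_updates N A (window_schedule (window_start j)) (window_start j) (N * q)
      (traj N A \<sigma> x1 (window_start j) \<omega>)"
    using assms by (intro run_updates_cong) (simp add: good_window_def)
  finally show ?thesis
    using window_schedule(2)[OF start] by simp
qed

lemma measure_good_window_ge: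
  assumes "past_determined (window_start j) E"
  shows "\<alpha> ^ (N * q) * measure M E \<le> measure M (E \<inter> good_window j)"
proof -
  have "E \<inter> good_window j = E \<inter> {\<omega>\<in>space M. \<forall>\<tau>\<in>{window_start j..<window_start j + N * q}.
      \<sigma> \<tau> \<omega> = window_schedule (window_start j) \<tau>}"
    by (simp add: good_window_def)
  then show ?thesis
    using measure_follow_schedule_ge[OF _ assms window_schedule(1)] by (simp add: window_start_def)
qed

lemma past_determined_good_window: "past_determined (window_start (Suc j)) (good_window j)"
  unfolding good_window_def window_start_Suc
  by (rule past_determined_follow_schedule) (simp add: window_start_def)

lemma sets_good_window: "good_window j \<in> sets M"
  using past_determined_good_window by (rule past_determined_sets)

lemma measure_no_good_window_le:
  "measure M (space M - (\<Union>j\<in>{i..<i + m}. good_window j)) \<le> (1 - \<alpha> ^ (N * q)) ^ m"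
proof -
  have "measure M (space M - (\<Union>j\<in>{i..<i + m}. good_window j))
      \<le> (1 - \<alpha> ^ (N * q)) ^ m * measure M (space M)"
    using \<alpha>_pos \<alpha>_le_1 past_determined_good_window measure_good_window_ge past_determined_space
    by (intro measure_avoid_all_le[OF mono_window_start]) (auto simp: power_le_one)
  then show ?thesis
    by (simp add: prob_space)
qed

lemma spread_traj_le_if_good_windows:
  assumes \<omega>: "\<omega> \<in> space M" and good: "\<forall>i<K. \<exists>j\<in>{i * m..<i * m + m}. \<omega> \<in> good_window j"
  shows "spread N (traj N A \<sigma> x1 (window_start (K * m)) \<omega>)
    \<le> contraction ^ K * spread N x1"
  using good
proof (induction K)
  case 0
  then show ?case
    by (simp add: window_start_def)
next
  case (Suc K)
  obtain j where j: "j \<in> {K * m..<K * m + m}" "\<omega> \<in> good_window j"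
    using Suc.prems by blast
  have "spread N (traj N A \<sigma> x1 (window_start (Suc K * m)) \<omega>)
      \<le> spread N (traj N A \<sigma> x1 (window_start (Suc j)) \<omega>)"
    using j \<omega> by (intro spread_traj_antimono monoD[OF mono_window_start]) (auto simp: window_start_def)
  also have "\<dots> \<le> contraction * spread N (traj N A \<sigma> x1 (window_start j) \<omega>)"
    by (rule spread_traj_good_window[OF j(2)])
  also have "\<dots> \<le> contraction * spread N (traj N A \<sigma> x1 (window_start (K * m)) \<omega>)"
    using j \<omega> contraction_bounds
    by (intro mult_left_mono spread_traj_antimono monoD[OF mono_window_start]) (auto simp: window_start_def)
  also have "\<dots> \<le> contraction * (contraction ^ K * spread N x1)"
    using Suc contraction_bounds by (intro mult_left_mono) auto
  finally show ?case
    by simp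
qed

lemma disagreement_ge_subset_missed_blocks:
  assumes k: "window_start (K * m) \<le> k"
    and K: "real N * (contraction ^ K * spread N x1)\<^sup>2 < \<epsilon>"
  shows "{\<omega>\<in>space M. disagreement N (traj N A \<sigma> x1 k \<omega>) \<ge> \<epsilon>}
    \<subseteq> (\<Union>i<K. space M - (\<Union>j\<in>{i * m..<i * m + m}. good_window j))"
proof (rule subsetI, rule ccontr)
  fix \<omega> assume \<omega>: "\<omega> \<in> {\<omega>\<in>space M. disagreement N (traj N A \<sigma> x1 k \<omega>) \<ge> \<epsilon>}"
    and "\<omega> \<notin> (\<Union>i<K. space M - (\<Union>j\<in>{i * m..<i * m + m}. good_window j))"
  then have "\<forall>i<K. \<exists>j\<in>{i * m..<i * m + m}. \<omega> \<in> good_window j"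
    by blast
  then have "spread N (traj N A \<sigma> x1 (window_start (K * m)) \<omega>) \<le> contraction ^ K * spread N x1"
    using \<omega> by (intro spread_traj_le_if_good_windows) auto
  moreover have "spread N (traj N A \<sigma> x1 k \<omega>) \<le> spread N (traj N A \<sigma> x1 (window_start (K * m)) \<omega>)"
    using \<omega> k by (intro spread_traj_antimono) (auto simp: window_start_def)
  ultimately have "(spread N (traj N A \<sigma> x1 k \<omega>))\<^sup>2 \<le> (contraction ^ K * spread N x1)\<^sup>2"
    using spread_nonneg[OF N_pos] by (intro power_mono) auto
  then have "disagreement N (traj N A \<sigma> x1 k \<omega>) \<le> real N * (contraction ^ K * spread N x1)\<^sup>2"
    using disagreement_le_spread[OF N_pos] by (meson mult_left_mono of_nat_0_le_iff order_trans)
  then show False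
    using \<omega> K by simp
qed

lemma measure_disagreement_ge_le:
  assumes "window_start (K * m) \<le> k" "real N * (contraction ^ K * spread N x1)\<^sup>2 < \<epsilon>"
  shows "measure M {\<omega>\<in>space M. disagreement N (traj N A \<sigma> x1 k \<omega>) \<ge> \<epsilon>}
    \<le> real K * (1 - \<alpha> ^ (N * q)) ^ m"
proof -
  let ?missed = "\<lambda>i. space M - (\<Union>j\<in>{i * m..<i * m + m}. good_window j)"
  have sets_missed: "?missed i \<in> sets M" for i
    using sets_good_window by auto
  have "measure M {\<omega>\<in>space M. disagreement N (traj N A \<sigma> x1 k \<omega>) \<ge> \<epsilon>}
      \<le> measure M (\<Union>i<K. ?missed i)"
    by (rule finite_measure_mono[OF disagreement_ge_subset_missed_blocks[OF assms]])
      (rule sets.finite_UN, simp, rule sets_missed)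
  also have "\<dots> \<le> (\<Sum>i<K. measure M (?missed i))"
    using sets_missed by (intro finite_measure_subadditive_finite) auto
  also have "\<dots> \<le> (\<Sum>i<K. (1 - \<alpha> ^ (N * q)) ^ m)"
    by (intro sum_mono measure_no_good_window_le)
  finally show ?thesis
    by simp
qed

lemma consensus:
  assumes "0 < \<epsilon>"
  shows "(\<lambda>k. measure M {\<omega>\<in>space M. disagreement N (traj N A \<sigma> x1 k \<omega>) \<ge> \<epsilon>}) \<longlonglongrightarrow> 0"
proof (rule LIMSEQ_I)
  fix e :: real
  assume "0 < e"
  let ?b = "1 - \<alpha> ^ (N * q)"
  have "(\<lambda>K. real N * (contraction ^ K * spread N x1)\<^sup>2) \<longlonglongrightarrow> real N * (0 * spread N x1)\<^sup>2"
    using contraction_bounds by (intro tendsto_intros LIMSEQ_power_zero) simp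
  then obtain K where K: "real N * (contraction ^ K * spread N x1)\<^sup>2 < \<epsilon>"
    using order_tendstoD(2)[OF _ assms] eventually_sequentially by force
  have "0 < \<alpha> ^ (N * q)" "\<alpha> ^ (N * q) \<le> 1"
    using \<alpha>_pos \<alpha>_le_1 by (simp_all add: power_le_one)
  then have "(\<lambda>m. real K * ?b ^ m) \<longlonglongrightarrow> real K * 0"
    by (intro tendsto_intros LIMSEQ_power_zero) simp
  then obtain m where m: "real K * ?b ^ m < e"
    using order_tendstoD(2)[OF _ \<open>0 < e\<close>] eventually_sequentially by force
  have "norm (measure M {\<omega>\<in>space M. disagreement N (traj N A \<sigma> x1 k \<omega>) \<ge> \<epsilon>} - 0) < e"
    if "window_start (K * m) \<le> k" for k
    using measure_disagreement_ge_le[OF that K] m by simp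
  then show "\<exists>k\<^sub>0. \<forall>k\<ge>k\<^sub>0. norm (measure M {\<omega>\<in>space M. disagreement N (traj N A \<sigma> x1 k \<omega>) \<ge> \<epsilon>} - 0) < e"
    by blast
qed

end

theorem corollary3:
  fixes N :: nat and A :: "nat \<Rightarrow> nat \<Rightarrow> real" and M :: "'a measure"
    and \<sigma> :: "nat \<Rightarrow> 'a \<Rightarrow> nat" and I :: "nat \<Rightarrow> nat set"
  assumes N: "N \<ge> 1"
    and stoch: "row_stochastic N A"
    and P: "prob_space M"
    and meas: "\<And>k. k \<ge> 1 \<Longrightarrow> \<sigma> k \<in> measurable M (count_space UNIV)"
    and vals: "\<And>k \<omega>. k \<ge> 1 \<Longrightarrow> \<omega> \<in> space M \<Longrightarrow> \<sigma> k \<omega> \<in> {1..N}"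
    and a: "rooted N A"
    and b: "\<exists>\<alpha>>0. \<forall>k\<ge>1. \<forall>v s. measure M (past_event M \<sigma> k v) > 0 \<and> cond_prob M \<sigma> k s v \<noteq> 0
                 \<longrightarrow> cond_prob M \<sigma> k s v \<ge> \<alpha>"
    and c: "\<forall>k\<ge>1. \<forall>v. (\<forall>i\<in>{1..<k}. v i \<in> {1..N}) \<and> measure M (past_event M \<sigma> k v) > 0
                 \<longrightarrow> {s\<in>{1..N}. cond_prob M \<sigma> k s v \<noteq> 0} = I k"
    and d: "\<exists>q>0. \<forall>k\<ge>1. (\<Union>\<tau>\<in>{k..k+q-1}. I \<tau>) = {1..N}"
    and e: "\<exists>Chi. Chi \<noteq> {} \<and> Chi \<subseteq> roots N A \<and> induced_strongly_connected N A Chi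
                 \<and> (\<forall>k\<ge>1. Chi \<subseteq> I k)"
  shows "\<forall>\<epsilon>>0. \<forall>x1 :: nat \<Rightarrow> real.
           (\<lambda>k. measure M {\<omega>\<in>space M. disagreement N (traj N A \<sigma> x1 k \<omega>) \<ge> \<epsilon>})
             \<longlonglongrightarrow> 0"
proof (intro allI impI)
  fix \<epsilon> :: real and x1 :: "nat \<Rightarrow> real"
  assume "0 < \<epsilon>"
  obtain \<alpha> where \<alpha>: "0 < \<alpha>" "\<forall>k\<ge>1. \<forall>v s. measure M (past_event M \<sigma> k v) > 0
      \<and> cond_prob M \<sigma> k s v \<noteq> 0 \<longrightarrow> cond_prob M \<sigma> k s v \<ge> \<alpha>"
    using b by blast
  obtain q where q: "0 < q" "\<forall>k\<ge>1. (\<Union>\<tau>\<in>{k..k+q-1}. I \<tau>) = {1..N}"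
    using d by blast
  obtain r where r: "r \<in> roots N A" "\<forall>k\<ge>1. r \<in> I k"
    using e by blast
  interpret rooted_schedule N A I q r
    using stoch q r by unfold_locales auto
  interpret selection_process M N \<sigma> I "min \<alpha> 1"
  proof (rule selection_process.intro[OF P], unfold_locales)
    show "min \<alpha> 1 \<le> cond_prob M \<sigma> k s v"
      if "1 \<le> k" "0 < measure M (past_event M \<sigma> k v)" "cond_prob M \<sigma> k s v \<noteq> 0" for k v s
      using \<alpha> that by force
  qed (use meas vals \<alpha> c in auto)
  interpret consensus_process N A I q r M \<sigma> "min \<alpha> 1"
    by intro_locales
  show "(\<lambda>k. measure M {\<omega>\<in>space M. disagreement N (traj N A \<sigma> x1 k \<omega>) \<ge> \<epsilon>}) \<longlonglongrightarrow> 0"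
    using consensus[OF \<open>0 < \<epsilon>\<close>] .
qed

end
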